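(* For every $h>0$, the function $E^h:\mathbb Z^8_h\to\mathbb O$, $E^h(x)=h^{-7}E^1(x/h)$, is a fundamental solution of $D^h$, i.e. $D^hE^h(x)=\delta_0^h(x)$ for every $x\in\mathbb Z^8_h$, where $\delta_0^h(0)=h^{-8}$ and $\delta_0^h(x)=0$ for $x\neq0$.
   Context: $\mathbb O$ is the real octonion algebra with basis $\mathbf e_0=1,\mathbf e_1,\dots,\mathbf e_7$, where $\mathbf e_i\mathbf e_j=-\delta_{ij}+\sum_k\varepsilon_{ijk}\mathbf e_k$ for $1\le i,j\le 7$, $\varepsilon_{ijk}$ totally antisymmetric with $\varepsilon_{ijk}=1$ for $ijk\in\{123,145,176,246,257,347,365\}$; $\overline{\mathbf e}_0=\mathbf e_0$, $\overline{\mathbf e}_l=-\mathbf e_l$ for $l\ge1$. For $h>0$, $\mathbb Z^8_h=(h\mathbb Z)^8$, $e_0,\dots,e_7$ are the standard unit vectors of $\mathbb R^8$, $\partial_l^hf(x)=(f(x+he_l)-f(x-he_l))/(2h)$ and $D^hf=\sum_{l=0}^7\mathbf e_l\,\partial_l^hf$. For $x\in\mathbb Z^8$, $$E^1(x)=-\frac{1}{(2\pi)^8}\int_{[-\pi,\pi]^8} i\Big(\sum_{l=0}^7\overline{\mathbf e}_l\sin u_l\Big)\Big(\sum_{l=0}^7\sin^2u_l\Big)^{-1}e^{i\sum_l u_lx_l}\,du=\frac{1}{(2\pi)^8}\int_{[-\pi,\pi]^8}\frac{\sum_{l=0}^7\overline{\mathbf e}_l\sin u_l}{\sum_{l=0}^7\sin^2u_l}\,\sin\Big(\sum_l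 u_lx_l\Big)du\in\mathbb O,$$ the integral being absolutely convergent. *)

theory Defs
  imports "HOL-Analysis.Analysis"
begin

text \<open>Octonions are represented as coefficient functions nat => real, the
coefficient of basis element e_k being the value at k; only k < 8 is used,
and all octonions produced below vanish for k >= 8.\<close>

type_synonym oct = "nat \<Rightarrow> real"

definition oct_triples :: "(nat \<times> nat \<times> nat) list" where
  "oct_triples = [(1,2,3),(1,4,5),(1,7,6),(2,4,6),(2,5,7),(3,4,7),(3,6,5)]"

definition oct_eps :: "nat \<Rightarrow> nat \<Rightarrow> nat \<Rightarrow> real" where
  "oct_eps i j k =
     (if (i,j,k) \<in> set oct_triples \<or> (j,k,i) \<in> set oct_triples \<or> (k,i,j) \<in> set oct_triples then 1
      else if (j,i,k) \<in> set oct_triples \<or> (i,k,j) \<in> set oct_triples \<or> (k,j,i) \<in> set oct_triples then -1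
      else 0)"

text \<open>Structure constants: e_i e_j = sum_k oct_c i j k e_k.\<close>
definition oct_c :: "nat \<Rightarrow> nat \<Rightarrow> nat \<Rightarrow> real" where
  "oct_c i j k =
     (if i = 0 then (if j = k then 1 else 0)
      else if j = 0 then (if i = k then 1 else 0)
      else if k = 0 then (if i = j then -1 else 0)
      else oct_eps i j k)"

definition oct_mult :: "oct \<Rightarrow> oct \<Rightarrow> oct" where
  "oct_mult a b = (\<lambda>k. if k < 8 then (\<Sum>i<8. \<Sum>j<8. a i * b j * oct_c i j k) else 0)"

definition oct_basis :: "nat \<Rightarrow> oct" where
  "oct_basis l = (\<lambda>k. if k = l then 1 else 0)"

definition unitv :: "nat \<Rightarrow> (nat \<Rightarrow> real)" where
  "unitv l = (\<lambda>j. if j = l then 1 else 0)"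

definition lattice8 :: "real \<Rightarrow> (nat \<Rightarrow> real) set" where
  "lattice8 h = {x. (\<forall>i<8. \<exists>m::int. x i = h * of_int m) \<and> (\<forall>i\<ge>8. x i = 0)}"

definition dpartial :: "real \<Rightarrow> nat \<Rightarrow> ((nat \<Rightarrow> real) \<Rightarrow> oct) \<Rightarrow> (nat \<Rightarrow> real) \<Rightarrow> oct" where
  "dpartial h l f x = (\<lambda>k. (f (\<lambda>j. x j + h * unitv l j) k - f (\<lambda>j. x j - h * unitv l j) k) / (2 * h))"

definition Dh :: "real \<Rightarrow> ((nat \<Rightarrow> real) \<Rightarrow> oct) \<Rightarrow> (nat \<Rightarrow> real) \<Rightarrow> oct" where
  "Dh h f x = (\<lambda>k. \<Sum>l<8. oct_mult (oct_basis l) (dpartial h l f x) k)"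

text \<open>E^1(x) = (2 pi)^(-8) \<integral>_{[-pi,pi]^8} (sum_l conj(e_l) sin u_l) / (sum_l sin^2 u_l) * sin(u.x) du,
componentwise; conj(e_0) = e_0, conj(e_l) = -e_l for l >= 1.\<close>
definition E1 :: "(nat \<Rightarrow> real) \<Rightarrow> oct" where
  "E1 x = (\<lambda>k. if k < 8 then
      (if k = 0 then 1 else -1) / (2 * pi) ^ 8 *
      (LINT u : PiE {..<8} (\<lambda>_. {-pi..pi}) | PiM {..<8} (\<lambda>_. lborel).
         sin (u k) / (\<Sum>l<8. (sin (u l))\<^sup>2) * sin (\<Sum>l<8. u l * x l))
    else 0)"

definition Eh :: "real \<Rightarrow> (nat \<Rightarrow> real) \<Rightarrow> oct" where
  "Eh h x = (\<lambda>k. h powr (-7) * E1 (\<lambda>j. x j / h) k)"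

definition delta0 :: "real \<Rightarrow> (nat \<Rightarrow> real) \<Rightarrow> oct" where
  "delta0 h x = (if (\<forall>j<8. x j = 0) then (\<lambda>k. h powr (-8) * oct_basis 0 k) else (\<lambda>_. 0))"

end

theory Submission
  imports Defs
begin

text \<open>
  At a lattice point \<open>x = h m\<close> the central difference in direction \<open>l\<close> turns \<open>sin (u\<cdot>x/h)\<close>
  into \<open>sin u\<^sub>l cos (u\<cdot>m) / h\<close>, since \<open>sin (a + b) - sin (a - b) = 2 sin b cos a\<close>.
  Hence \<open>D\<^sup>h E\<^sup>h x\<close> is \<open>h\<^sup>-\<^sup>8 (2\<pi>)\<^sup>-\<^sup>8\<close> times the integral over \<open>[-\<pi>,\<pi>]\<^sup>8\<close> of
  \<open>(\<Sum> e\<^sub>l sin u\<^sub>l) (\<Sum> conj e\<^sub>j sin u\<^sub>j) cos (u\<cdot>m) / (\<Sum> sin\<^sup>2 u\<^sub>l)\<close>.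
  The octonion identity \<open>(\<Sum> e\<^sub>l s\<^sub>l) (\<Sum> conj e\<^sub>j s\<^sub>j) = \<Sum> s\<^sub>l\<^sup>2\<close> cancels the denominator,
  and \<open>\<integral> cos (u\<cdot>m) du\<close> is \<open>(2\<pi>)\<^sup>8\<close> for \<open>m = 0\<close> and \<open>0\<close> otherwise. Differencing under
  the integral sign is justified by \<open>\<bar>sin u\<^sub>k\<bar> / \<Sum> sin\<^sup>2 u\<^sub>l \<le> \<Prod> \<bar>sin u\<^sub>l\<bar> powr (-1/8)\<close>, whose
  right-hand side is integrable because \<open>\<bar>sin t\<bar> powr (-1/8)\<close> is integrable over \<open>[-\<pi>,\<pi>]\<close>.
\<close>

lemma sin_ge_third:
  assumes "0 \<le> t" "t \<le> pi/2"
  shows "t/3 \<le> sin t"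
proof -
  have "t^2 \<le> 2^2"
    using assms pi_less_4 by (intro power_mono) auto
  then have "t^3 \<le> 4 * t"
    using assms by (simp add: power3_eq_cube power2_eq_square mult_right_mono)
  have "\<bar>sin t - (\<Sum>m<3. sin_coeff m * t ^ m)\<bar> \<le> inverse (fact 3) * \<bar>t\<bar> ^ 3"
    by (rule Maclaurin_sin_bound)
  moreover have "(\<Sum>m<3. sin_coeff m * t ^ m) = t"
    by (simp add: numeral_eq_Suc lessThan_Suc sin_coeff_def)
  ultimately have "\<bar>sin t - t\<bar> \<le> t^3 / 6"
    using assms by (simp add: fact_numeral)
  also have "\<dots> \<le> 2/3 * t"
    using \<open>t^3 \<le> 4 * t\<close> by linarith
  finally show ?thesis
    by linarith
qed

lemma abs_sin_ge_dist_multiple_pi: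
  assumes "\<bar>t\<bar> \<le> pi"
  shows "min \<bar>t\<bar> (pi - \<bar>t\<bar>) / 3 \<le> \<bar>sin t\<bar>"
proof -
  have "min s (pi - s) / 3 \<le> sin s" if "0 \<le> s" "s \<le> pi" for s
  proof (cases "s \<le> pi/2")
    case True
    then show ?thesis using sin_ge_third[of s] that by auto
  next
    case False
    then show ?thesis using sin_ge_third[of "pi - s"] that by auto
  qed
  from this[of "\<bar>t\<bar>"] show ?thesis
    using assms by (cases "t \<ge> 0") auto
qed

definition powr_singularity :: "real \<Rightarrow> real \<Rightarrow> real" where
  "powr_singularity a t = indicator {0..pi} t * t powr (-a)"

lemma integrable_powr_singularity:
  assumes "a < 1"
  shows "integrable lborel (powr_singularity a)"
proof -
  have "(\<lambda>t. t powr (-a)) integrable_on {0..pi}"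
    using assms by (intro integrable_on_powr_from_0) auto
  then have "(\<lambda>t. t powr (-a)) absolutely_integrable_on {0..pi}"
    by (subst absolutely_integrable_on_iff_nonneg) auto
  then show ?thesis
    unfolding powr_singularity_def set_integrable_def absolutely_integrable_on_def
    by (subst (asm) integrable_completion) auto
qed

lemma powr_singularity_nonneg: "powr_singularity a t \<ge> 0"
  by (simp add: powr_singularity_def indicator_def)

definition sin_majorant :: "real \<Rightarrow> real \<Rightarrow> real" where
  "sin_majorant a t = 3 powr a *
    (powr_singularity a t + powr_singularity a (-t) + powr_singularity a (pi - t) + powr_singularity a (pi + t))"

lemma sin_majorant_nonneg: "sin_majorant a t \<ge> 0"
  unfolding sin_majorant_def by (intro mult_nonneg_nonneg add_nonneg_nonneg powr_singularity_nonneg) auto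

lemma integrable_sin_majorant:
  assumes "a < 1"
  shows "integrable lborel (sin_majorant a)"
proof -
  have "integrable lborel (\<lambda>t. powr_singularity a (d + c * t))" if "c \<noteq> 0" for c d
    using lborel_integrable_real_affine_iff[OF that, of "powr_singularity a" d]
      integrable_powr_singularity[OF assms]
    by simp
  from this[of "-1" 0] this[of "-1" pi] this[of 1 pi] show ?thesis
    unfolding sin_majorant_def using integrable_powr_singularity[OF assms] by (auto simp: add.commute)
qed

lemma abs_sin_powr_le_sin_majorant:
  assumes "0 \<le> a" "\<bar>t\<bar> \<le> pi" "sin t \<noteq> 0"
  shows "\<bar>sin t\<bar> powr (-a) \<le> sin_majorant a t"
proof -
  define d where "d = min \<bar>t\<bar> (pi - \<bar>t\<bar>)"
  have "sin \<bar>t\<bar> \<noteq> 0"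
    using assms(3) by (simp add: abs_if)
  then have "t \<noteq> 0" "\<bar>t\<bar> \<noteq> pi"
    by auto
  then have "d > 0"
    using assms by (auto simp: d_def)
  have "\<bar>sin t\<bar> powr (-a) \<le> (d/3) powr (-a)"
    using abs_sin_ge_dist_multiple_pi[OF assms(2)] \<open>d > 0\<close> assms(1)
    by (intro powr_mono2') (auto simp: d_def)
  also have "\<dots> = 3 powr a * d powr (-a)"
    using \<open>d > 0\<close> by (simp add: powr_divide powr_minus divide_simps)
  also have "d powr (-a) \<le>
      powr_singularity a t + powr_singularity a (-t) + powr_singularity a (pi - t) + powr_singularity a (pi + t)"
    using assms(2) powr_singularity_nonneg[of a t] powr_singularity_nonneg[of a "-t"]
      powr_singularity_nonneg[of a "pi - t"] powr_singularity_nonneg[of a "pi + t"]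
    by (cases "t \<ge> 0") (auto simp: d_def powr_singularity_def min_def)
  finally show ?thesis
    unfolding sin_majorant_def by (simp add: mult_left_mono)
qed

lemma abs_div_sum_squares_le_prod_powr:
  fixes s :: "nat \<Rightarrow> real"
  assumes "k < n" and nz: "\<forall>l<n. s l \<noteq> 0"
  shows "\<bar>s k\<bar> / (\<Sum>l<n. (s l)\<^sup>2) \<le> (\<Prod>l<n. \<bar>s l\<bar> powr (-1/n))"
proof -
  define S where "S = (\<Sum>l<n. (s l)\<^sup>2)"
  have sq_le: "(s l)\<^sup>2 \<le> S" if "l < n" for l
    unfolding S_def using that by (intro member_le_sum) auto
  have "0 < (s k)\<^sup>2"
    using nz assms(1) by simp
  then have "S > 0"
    using sq_le[OF assms(1)] by linarith
  have "\<bar>s k\<bar> \<le> S powr (1/2)"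
    using real_sqrt_le_mono[OF sq_le[OF assms(1)]] \<open>S > 0\<close> by (simp add: powr_half_sqrt)
  then have "\<bar>s k\<bar> / S \<le> S powr (1/2) / S"
    using \<open>S > 0\<close> by (simp add: divide_right_mono)
  also have "\<dots> = S powr (-1/2)"
    using \<open>S > 0\<close> powr_diff[of S "1/2" 1] by simp
  also have "\<dots> = (\<Prod>l<n. S powr (-1 / (2 * n)))"
    using \<open>S > 0\<close> assms(1) by (simp add: powr_realpow[symmetric] powr_powr)
  also have "\<dots> \<le> (\<Prod>l<n. ((s l)\<^sup>2) powr (-1 / (2 * n)))"
    using nz sq_le by (intro prod_mono) (auto intro: powr_mono2')
  also have "\<dots> = (\<Prod>l<n. \<bar>s l\<bar> powr (-1/n))"
  proof (intro prod.cong refl)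
    fix l
    have "\<bar>s l\<bar> powr (-1/n) = (\<bar>s l\<bar> powr 2) powr (-1 / (2 * n))"
      by (subst powr_powr) simp
    then show "((s l)\<^sup>2) powr (-1 / (2 * n)) = \<bar>s l\<bar> powr (-1/n)"
      by simp
  qed
  finally show ?thesis
    unfolding S_def .
qed

abbreviation lborel_pow :: "nat \<Rightarrow> (nat \<Rightarrow> real) measure" where
  "lborel_pow n \<equiv> PiM {..<n} (\<lambda>_. lborel)"

definition cube :: "nat \<Rightarrow> (nat \<Rightarrow> real) set" where
  "cube n = PiE {..<n} (\<lambda>_. {-pi..pi})"

abbreviation sin_sq_sum :: "nat \<Rightarrow> (nat \<Rightarrow> real) \<Rightarrow> real" where
  "sin_sq_sum n u \<equiv> \<Sum>l<n. (sin (u l))\<^sup>2"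

lemma sets_cube [measurable]: "cube n \<in> sets (lborel_pow n)"
  unfolding cube_def by (rule sets_PiM_I_finite) auto

lemma borel_measurable_sin_sq_sum: "sin_sq_sum n \<in> borel_measurable (lborel_pow n)"
  by measurable

lemma null_sets_sin_zero: "{t::real. sin t = 0} \<in> null_sets lborel"
proof -
  have "{t::real. sin t = 0} = range (\<lambda>i::int. of_int i * pi)"
    by (auto simp: sin_zero_iff_int2)
  then show ?thesis
    by (simp add: countable_imp_null_set_lborel)
qed

lemma AE_sin_component_nonzero: "AE u in lborel_pow n. \<forall>l<n. sin (u l) \<noteq> 0"
proof -
  interpret product_sigma_finite "\<lambda>_::nat. lborel :: real measure"
    by standard
  have "AE u in lborel_pow n. sin (u l) \<noteq> 0" if "l < n" for l
  proof -
    define A where "A = (\<lambda>i. if i = l then {t::real. sin t = 0} else UNIV)"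
    have A_sets: "A i \<in> sets lborel" for i
      using null_sets_sin_zero by (auto simp: A_def null_setsD2)
    have "emeasure (lborel_pow n) (PiE {..<n} A) = (\<Prod>i<n. emeasure lborel (A i))"
      using A_sets by (intro emeasure_PiM) auto
    also have "\<dots> = 0"
      using that null_sets_sin_zero by (intro prod_zero bexI[of _ l]) (auto simp: A_def)
    finally have "PiE {..<n} A \<in> null_sets (lborel_pow n)"
      using A_sets by (auto simp: null_sets_def intro!: sets_PiM_I_finite)
    then show ?thesis
      by (rule AE_I') (use that in \<open>auto simp: A_def PiE_def space_PiM\<close>)
  qed
  then have "AE u in lborel_pow n. \<forall>l\<in>{..<n}. sin (u l) \<noteq> 0"
    by (intro AE_finite_allI) auto
  then show ?thesis
    by eventually_elim auto
qed

lemma AE_sin_sq_sum_pos: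
  assumes "0 < n"
  shows "AE u in lborel_pow n. 0 < sin_sq_sum n u"
  using AE_sin_component_nonzero
proof eventually_elim
  case (elim u)
  then have "0 < (sin (u 0))\<^sup>2"
    using assms by simp
  also have "\<dots> \<le> sin_sq_sum n u"
    using assms by (intro member_le_sum) auto
  finally show ?case .
qed

lemma integrable_sin_kernel:
  assumes "2 \<le> n" "k < n"
    and g: "g \<in> borel_measurable (lborel_pow n)" "\<And>u. \<bar>g u\<bar> \<le> 1"
  shows "integrable (lborel_pow n) (\<lambda>u. indicator (cube n) u * (sin (u k) / sin_sq_sum n u * g u))"
proof (rule Bochner_Integration.integrable_bound)
  interpret product_sigma_finite "\<lambda>_::nat. lborel :: real measure"
    by standard
  show "integrable (lborel_pow n) (\<lambda>u. \<Prod>l\<in>{..<n}. sin_majorant (1/n) (u l))"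
    using assms(1) by (intro product_integrable_prod integrable_sin_majorant) auto
  show "(\<lambda>u. indicator (cube n) u * (sin (u k) / sin_sq_sum n u * g u)) \<in> borel_measurable (lborel_pow n)"
    by measurable (use assms(2) g(1) borel_measurable_sin_sq_sum in auto)
  show "AE u in lborel_pow n. norm (indicator (cube n) u * (sin (u k) / sin_sq_sum n u * g u))
      \<le> norm (\<Prod>l\<in>{..<n}. sin_majorant (1/n) (u l))"
    using AE_sin_component_nonzero
  proof eventually_elim
    case (elim u)
    show ?case
    proof (cases "u \<in> cube n")
      case True
      have "\<bar>sin (u k) / sin_sq_sum n u * g u\<bar> \<le> \<bar>sin (u k)\<bar> / sin_sq_sum n u"
        using g(2)[of u] by (simp add: abs_mult sum_nonneg divide_right_mono mult_left_le)
      also have "\<dots> \<le> (\<Prod>l<n. \<bar>sin (u l)\<bar> powr (-1/n))"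
        using abs_div_sum_squares_le_prod_powr[of k n "\<lambda>l. sin (u l)"] assms(2) elim by simp
      also have "\<dots> \<le> (\<Prod>l<n. sin_majorant (1/n) (u l))"
        using True elim
        by (intro prod_mono) (force simp: cube_def PiE_iff abs_le_iff intro!: abs_sin_powr_le_sin_majorant)
      finally show ?thesis
        using True by (simp add: abs_prod abs_of_nonneg sin_majorant_nonneg)
    qed simp
  qed
qed

lemma integral_exp_int_freq:
  fixes m :: int
  shows "integral\<^sup>L lborel (\<lambda>t. indicator {-pi..pi} t *\<^sub>R exp (\<i> * of_real (t * of_int m)))
       = (if m = 0 then of_real (2 * pi) else 0)"
proof (cases "m = 0")
  case True
  then show ?thesis
    by (simp add: indicator_scaleR_eq_if scaleR_conv_of_real)
next
  case False
  define F where "F t = exp (\<i> * of_real (t * of_int m)) / (\<i> * of_int m)" for t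
  have "integral\<^sup>L lborel (\<lambda>t. indicator {-pi..pi} t *\<^sub>R exp (\<i> * of_real (t * of_int m)))
      = F pi - F (-pi)"
  proof (rule integral_FTC_atLeastAtMost)
    fix x
    have "((\<lambda>z. exp (\<i> * (z * of_int m)) / (\<i> * of_int m))
        has_field_derivative exp (\<i> * of_real (x * of_int m))) (at (of_real x))"
      using False by (auto intro!: derivative_eq_intros simp: field_simps)
    from has_vector_derivative_real_field[OF this]
    show "(F has_vector_derivative exp (\<i> * of_real (x * of_int m))) (at x within {-pi..pi})"
      unfolding F_def by simp
  qed (auto intro!: continuous_intros)
  also have "F pi = F (-pi)"
  proof -
    have "\<i> * of_real (pi * of_int m) = (2 * of_int m * pi) * \<i> + \<i> * of_real ((-pi) * of_int m)"
      by (simp add: algebra_simps)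
    then have "exp (\<i> * of_real (pi * of_int m))
        = exp ((2 * of_int m * pi) * \<i>) * exp (\<i> * of_real ((-pi) * of_int m))"
      by (simp only: exp_add)
    moreover have "exp ((2 * of_int m * pi) * \<i>) = 1"
      by (rule exp_integer_2pi) simp
    ultimately show ?thesis
      unfolding F_def by simp
  qed
  finally show ?thesis
    using False by simp
qed

lemma integral_cube_cos_int_freq:
  fixes m :: "nat \<Rightarrow> int"
  shows "integral\<^sup>L (lborel_pow n) (\<lambda>u. indicator (cube n) u * cos (\<Sum>l<n. u l * of_int (m l)))
       = (if \<forall>l<n. m l = 0 then (2 * pi) ^ n else 0)"
proof -
  interpret product_sigma_finite "\<lambda>_::nat. lborel :: real measure"
    by standard
  define f where "f = (\<lambda>l t. indicator {-pi..pi} t *\<^sub>R exp (\<i> * of_real (t * of_int (m l))))"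
  have "set_integrable lborel {-pi..pi} (\<lambda>t. exp (\<i> * of_real (t * of_int (m l))))" for l
    by (intro borel_integrable_atLeastAtMost' continuous_intros)
  then have int_f: "integrable lborel (f l)" for l
    unfolding f_def set_integrable_def .
  have "Re (\<Prod>l<n. f l (u l)) = indicator (cube n) u * cos (\<Sum>l<n. u l * of_int (m l))"
    if "u \<in> space (lborel_pow n)" for u
  proof -
    have "(\<Prod>l<n. f l (u l)) = of_real (\<Prod>l<n. indicator {-pi..pi} (u l))
        * exp (\<Sum>l<n. \<i> * of_real (u l * of_int (m l)))"
      by (simp add: f_def scaleR_conv_of_real prod.distrib exp_sum)
    also have "(\<Prod>l<n. indicator {-pi..pi} (u l) :: real) = indicator (cube n) u"
      using that by (auto simp: cube_def space_PiM PiE_iff indicator_def prod_zero)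
    also have "(\<Sum>l<n. \<i> * of_real (u l * of_int (m l))) = \<i> * of_real (\<Sum>l<n. u l * of_int (m l))"
      by (simp add: sum_distrib_left)
    finally have "(\<Prod>l<n. f l (u l)) = of_real (indicator (cube n) u) * cis (\<Sum>l<n. u l * of_int (m l))"
      by (simp only: cis_conv_exp)
    then show ?thesis
      by simp
  qed
  then have "integral\<^sup>L (lborel_pow n) (\<lambda>u. indicator (cube n) u * cos (\<Sum>l<n. u l * of_int (m l)))
      = integral\<^sup>L (lborel_pow n) (\<lambda>u. Re (\<Prod>l<n. f l (u l)))"
    by (intro Bochner_Integration.integral_cong) auto
  also have "\<dots> = Re (\<Prod>l<n. integral\<^sup>L lborel (f l))"
    using int_f by (simp add: integral_Re product_integrable_prod product_integral_prod)
  also have "(\<Prod>l<n. integral\<^sup>L lborel (f l)) = of_real (if \<forall>l<n. m l = 0 then (2 * pi) ^ n else 0)"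
    unfolding f_def integral_exp_int_freq by (auto simp: prod_zero_iff)
  finally show ?thesis
    by simp
qed

lemma oct_mult_basis_left:
  assumes "l < 8" "k < 8"
  shows "oct_mult (oct_basis l) b k = (\<Sum>j<8. b j * oct_c l j k)"
proof -
  have "oct_mult (oct_basis l) b k = (\<Sum>i<8. \<Sum>j<8. (if i = l then 1 else 0) * b j * oct_c i j k)"
    using assms(2) by (simp add: oct_mult_def oct_basis_def)
  also have "\<dots> = (\<Sum>i<8. if i = l then (\<Sum>j<8. b j * oct_c i j k) else 0)"
    by (intro sum.cong) auto
  finally show ?thesis
    using assms(1) by simp
qed

abbreviation conj_sign :: "nat \<Rightarrow> real" where
  "conj_sign j \<equiv> (if j = 0 then 1 else -1)"

text \<open>\<open>(\<Sum> e\<^sub>l s\<^sub>l) (\<Sum> conj e\<^sub>j s\<^sub>j) = \<Sum> s\<^sub>l\<^sup>2\<close> in structure constants, with \<open>conj e\<^sub>j = conj_sign j \<cdot> e\<^sub>j\<close>.\<close>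

lemma oct_symbol_mult_conj:
  fixes s :: "nat \<Rightarrow> real"
  assumes "k < 8"
  shows "(\<Sum>l<8. \<Sum>j<8. conj_sign j * s j * s l * oct_c l j k) = (if k = 0 then \<Sum>l<8. (s l)\<^sup>2 else 0)"
  using assms
  by (simp add: numeral_eq_Suc lessThan_Suc oct_c_def oct_eps_def oct_triples_def less_Suc_eq)

abbreviation int_dot :: "(nat \<Rightarrow> real) \<Rightarrow> (nat \<Rightarrow> int) \<Rightarrow> real" where
  "int_dot u m \<equiv> \<Sum>i<8. u i * of_int (m i)"

lemma E1_eq_integral:
  assumes "k < 8"
  shows "E1 z k = conj_sign k / (2 * pi) ^ 8 *
    integral\<^sup>L (lborel_pow 8)
      (\<lambda>u. indicator (cube 8) u * (sin (u k) / sin_sq_sum 8 u * sin (\<Sum>l<8. u l * z l)))"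
  using assms by (simp add: E1_def set_lebesgue_integral_def cube_def)

lemma sum_shifted_lattice_point:
  assumes "h > 0" "\<forall>i<8. x i = h * of_int (m i)" "l < 8"
  shows "(\<Sum>i<8. u i * ((x i + c * h * unitv l i) / h)) = int_dot u m + c * u l"
proof -
  have "(\<Sum>i<8. u i * ((x i + c * h * unitv l i) / h)) = (\<Sum>i<8. u i * of_int (m i) + c * (u i * unitv l i))"
    using assms(1,2) by (intro sum.cong) (auto simp: field_simps)
  also have "\<dots> = int_dot u m + c * (\<Sum>i<8. u i * unitv l i)"
    by (simp only: sum.distrib sum_distrib_left)
  also have "(\<Sum>i<8. u i * unitv l i) = u l"
    using assms(3) by (simp add: unitv_def if_distrib cong: if_cong)
  finally show ?thesis .
qed

definition diff_kernel :: "(nat \<Rightarrow> int) \<Rightarrow> nat \<Rightarrow> nat \<Rightarrow> (nat \<Rightarrow> real) \<Rightarrow> real" where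
  "diff_kernel m j l u = indicator (cube 8) u * (sin (u j) / sin_sq_sum 8 u * (sin (u l) * cos (int_dot u m)))"

lemma integrable_diff_kernel:
  assumes "j < 8" "l < 8"
  shows "integrable (lborel_pow 8) (diff_kernel m j l)"
  unfolding diff_kernel_def using assms
  by (intro integrable_sin_kernel) (auto simp: abs_mult intro: mult_le_one)

lemma dpartial_Eh_lattice:
  assumes h: "h > 0" and x: "\<forall>i<8. x i = h * of_int (m i)" and "l < 8" "k < 8"
  shows "dpartial h l (Eh h) x k
    = h powr (-8) * conj_sign k / (2 * pi) ^ 8 * integral\<^sup>L (lborel_pow 8) (diff_kernel m k l)"
proof -
  define f where
    "f s = (\<lambda>u. indicator (cube 8) u * (sin (u k) / sin_sq_sum 8 u * sin (int_dot u m + s * u l)))" for s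
  have int_f: "integrable (lborel_pow 8) (f s)" for s
    unfolding f_def using assms(3,4) by (intro integrable_sin_kernel) auto
  have E1_shift: "E1 (\<lambda>j. (x j + s * h * unitv l j) / h) k
      = conj_sign k / (2 * pi) ^ 8 * integral\<^sup>L (lborel_pow 8) (f s)" for s
    by (simp only: E1_eq_integral[OF assms(4)] sum_shifted_lattice_point[OF h x \<open>l < 8\<close>] f_def)
  have "h powr (-7) / h = h powr (-8)"
    using h powr_diff[of h "-7" 1] by simp
  have "dpartial h l (Eh h) x k = h powr (-7) / (2 * h) *
      (E1 (\<lambda>j. (x j + 1 * h * unitv l j) / h) k - E1 (\<lambda>j. (x j + (-1) * h * unitv l j) / h) k)"
    by (simp add: dpartial_def Eh_def diff_divide_distrib right_diff_distrib)
  also have "\<dots> = h powr (-7) / (2 * h) * (conj_sign k / (2 * pi) ^ 8 *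
      (integral\<^sup>L (lborel_pow 8) (f 1) - integral\<^sup>L (lborel_pow 8) (f (-1))))"
    unfolding E1_shift by (simp only: right_diff_distrib)
  also have "integral\<^sup>L (lborel_pow 8) (f 1) - integral\<^sup>L (lborel_pow 8) (f (-1))
      = integral\<^sup>L (lborel_pow 8) (\<lambda>u. f 1 u - f (-1) u)"
    using int_f by simp
  also have "(\<lambda>u. f 1 u - f (-1) u) = (\<lambda>u. 2 * diff_kernel m k l u)"
    by (simp add: f_def diff_kernel_def sin_add sin_diff algebra_simps)
  finally show ?thesis
    unfolding \<open>h powr (-7) / h = h powr (-8)\<close>[symmetric] using h by (simp add: field_simps)
qed

lemma diff_kernel_symbol_sum:
  assumes "k < 8" "0 < sin_sq_sum 8 u"
  shows "(\<Sum>l<8. \<Sum>j<8. conj_sign j * oct_c l j k * diff_kernel m j l u)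
    = (if k = 0 then indicator (cube 8) u * cos (int_dot u m) else 0)"
proof -
  have "(\<Sum>l<8. \<Sum>j<8. conj_sign j * oct_c l j k * diff_kernel m j l u)
      = indicator (cube 8) u * cos (int_dot u m) / sin_sq_sum 8 u *
        (\<Sum>l<8. \<Sum>j<8. conj_sign j * sin (u j) * sin (u l) * oct_c l j k)"
    by (simp add: diff_kernel_def sum_distrib_left divide_inverse mult_ac)
  then show ?thesis
    using assms(2) by (simp add: oct_symbol_mult_conj[OF assms(1)])
qed

lemma Dh_Eh_lattice:
  assumes h: "h > 0" and x: "\<forall>i<8. x i = h * of_int (m i)" and "k < 8"
  shows "Dh h (Eh h) x k = h powr (-8) / (2 * pi) ^ 8 *
    (if k = 0 then integral\<^sup>L (lborel_pow 8) (\<lambda>u. indicator (cube 8) u * cos (int_dot u m)) else 0)"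
proof -
  define c where "c j l = conj_sign j * oct_c l j k" for j l
  have int_c: "integrable (lborel_pow 8) (\<lambda>u. c j l * diff_kernel m j l u)" if "j < 8" "l < 8" for j l
    using that by (intro integrable_mult_right integrable_diff_kernel)
  have "Dh h (Eh h) x k = (\<Sum>l<8. \<Sum>j<8. dpartial h l (Eh h) x j * oct_c l j k)"
    unfolding Dh_def using assms(3) by (simp add: oct_mult_basis_left)
  also have "\<dots> = h powr (-8) / (2 * pi) ^ 8 *
      (\<Sum>l<8. \<Sum>j<8. integral\<^sup>L (lborel_pow 8) (\<lambda>u. c j l * diff_kernel m j l u))"
    by (simp add: dpartial_Eh_lattice[OF h x] c_def sum_distrib_left mult_ac)
  also have "(\<Sum>l<8. \<Sum>j<8. integral\<^sup>L (lborel_pow 8) (\<lambda>u. c j l * diff_kernel m j l u))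
      = integral\<^sup>L (lborel_pow 8) (\<lambda>u. \<Sum>l<8. \<Sum>j<8. c j l * diff_kernel m j l u)"
  proof -
    have "integral\<^sup>L (lborel_pow 8) (\<lambda>u. \<Sum>l<8. \<Sum>j<8. c j l * diff_kernel m j l u)
        = (\<Sum>l<8. integral\<^sup>L (lborel_pow 8) (\<lambda>u. \<Sum>j<8. c j l * diff_kernel m j l u))"
      using int_c by (intro Bochner_Integration.integral_sum Bochner_Integration.integrable_sum) auto
    also have "\<dots> = (\<Sum>l<8. \<Sum>j<8. integral\<^sup>L (lborel_pow 8) (\<lambda>u. c j l * diff_kernel m j l u))"
      using int_c by (intro sum.cong refl Bochner_Integration.integral_sum) auto
    finally show ?thesis ..
  qed
  also have "\<dots> = integral\<^sup>L (lborel_pow 8)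
      (\<lambda>u. if k = 0 then indicator (cube 8) u * cos (int_dot u m) else 0)"
  proof (rule integral_cong_AE)
    show "(\<lambda>u. \<Sum>l<8. \<Sum>j<8. c j l * diff_kernel m j l u) \<in> borel_measurable (lborel_pow 8)"
      using int_c by (intro borel_measurable_sum borel_measurable_integrable) auto
    show "(\<lambda>u. if k = 0 then indicator (cube 8) u * cos (int_dot u m) else 0) \<in> borel_measurable (lborel_pow 8)"
      by measurable
    show "AE u in lborel_pow 8. (\<Sum>l<8. \<Sum>j<8. c j l * diff_kernel m j l u)
        = (if k = 0 then indicator (cube 8) u * cos (int_dot u m) else 0)"
      using AE_sin_sq_sum_pos[OF zero_less_numeral]
      by eventually_elim (simp_all add: c_def diff_kernel_symbol_sum[OF assms(3)])
  qed
  finally show ?thesis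
    by simp
qed

theorem mainTheorem5:
  fixes h :: real
  assumes "h > 0"
  shows "\<forall>x \<in> lattice8 h. Dh h (Eh h) x = delta0 h x"
proof
  fix x assume "x \<in> lattice8 h"
  then have "\<forall>i. \<exists>mi::int. i < 8 \<longrightarrow> x i = h * of_int mi"
    by (auto simp: lattice8_def)
  then obtain m :: "nat \<Rightarrow> int" where m: "\<forall>i<8. x i = h * of_int (m i)"
    by metis
  have origin_iff: "(\<forall>i<8. m i = 0) \<longleftrightarrow> (\<forall>i<8. x i = 0)"
    using m assms by auto
  show "Dh h (Eh h) x = delta0 h x"
  proof
    fix k
    show "Dh h (Eh h) x k = delta0 h x k"
    proof (cases "k < 8")
      case True
      then show ?thesis
        using Dh_Eh_lattice[OF assms m True] integral_cube_cos_int_freq[of 8 m] origin_iff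
        by (cases "k = 0"; cases "\<forall>i<8. x i = 0") (auto simp: delta0_def oct_basis_def power_mult_distrib)
    next
      case False
      then show ?thesis
        by (simp add: Dh_def oct_mult_def delta0_def oct_basis_def)
    qed
  qed
qed

end
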